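(* Let $\gamma\ge1$ and let $\alpha,\beta$ be positive constants with $-1<\alpha\le\beta$. Then $$\alpha^2\le\frac{\mathcal{Q}\big((\alpha+1)^{2/\gamma}\big)}{\zeta(\beta,\gamma)},$$ where $\mathcal{Q}(h)=\frac1\gamma\int_1^h(s^{\gamma-2}-s^{-2})\,ds$ and $\zeta(\beta,\gamma)=\frac{1}{\gamma^2}\big\{(\beta+1)^{-\frac2\gamma}+(\beta+1)^{-\frac2\gamma-1}\big\}$. *)

theory Defs
  imports "HOL-Analysis.Analysis"
begin

definition calQ :: "real \<Rightarrow> real \<Rightarrow> real" where
  "calQ \<gamma> h = (1 / \<gamma>) * (LBINT s=1..h. s powr (\<gamma> - 2) - s powr (-2))"

definition zeta :: "real \<Rightarrow> real \<Rightarrow> real" where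
  "zeta \<beta> \<gamma> = (1 / \<gamma>\<^sup>2) * ((\<beta> + 1) powr (- 2 / \<gamma>) + (\<beta> + 1) powr (- 2 / \<gamma> - 1))"

end

theory Submission
  imports Defs
begin

text \<open>For \<open>p = 2/\<gamma>\<close>, the function \<open>H t = Q(t\<^sup>p) - (t - 1)\<^sup>2 \<zeta>(t - 1, \<gamma>)\<close> vanishes
  at \<open>t = 1\<close> and has derivative \<open>(t - 1)\<^sup>2 t\<^sup>-\<^sup>p\<^sup>-\<^sup>2 (p t + p + 1) / \<gamma>\<^sup>2 \<ge> 0\<close> for \<open>t > 0\<close>,
  hence \<open>\<alpha>\<^sup>2 \<zeta>(\<alpha>, \<gamma>) \<le> Q((\<alpha> + 1)\<^sup>p)\<close> for \<open>\<alpha> \<ge> 0\<close>. Since \<open>\<zeta>(\<cdot>, \<gamma>)\<close> is positive and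
  decreasing, replacing \<open>\<zeta>(\<alpha>, \<gamma>)\<close> by \<open>\<zeta>(\<beta>, \<gamma>)\<close> for \<open>\<beta> \<ge> \<alpha>\<close> keeps the inequality.\<close>

definition calQ_primitive :: "real \<Rightarrow> real \<Rightarrow> real" where
  "calQ_primitive \<gamma> s = (if \<gamma> = 1 then ln s else s powr (\<gamma> - 1) / (\<gamma> - 1)) + 1 / s"

lemma calQ_primitive_has_real_derivative:
  fixes \<gamma> s :: real
  assumes "s > 0"
  shows "(calQ_primitive \<gamma> has_real_derivative s powr (\<gamma> - 2) - s powr (-2)) (at s)"
proof -
  have inv: "s powr (-2) = 1 / s\<^sup>2"
    using assms by (simp add: powr_minus_divide powr_numeral)
  show ?thesis
  proof (cases "\<gamma> = 1")
    case True
    have "s powr (\<gamma> - 2) = 1 / s"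
      using assms True by (simp add: powr_minus_divide)
    with True assms show ?thesis
      unfolding calQ_primitive_def inv
      by (auto intro!: derivative_eq_intros simp: power2_eq_square field_simps)
  next
    case False
    have "((\<lambda>s. s powr (\<gamma> - 1) / (\<gamma> - 1) + 1 / s) has_real_derivative
        (\<gamma> - 1) * s powr (\<gamma> - 1 - 1) / (\<gamma> - 1) - 1 / s\<^sup>2) (at s)"
      using assms by (auto intro!: derivative_eq_intros simp: power2_eq_square)
    moreover have "(\<gamma> - 1) * s powr (\<gamma> - 1 - 1) / (\<gamma> - 1) = s powr (\<gamma> - 2)"
      using False by simp
    ultimately show ?thesis
      using False unfolding calQ_primitive_def inv by simp
  qed
qed

lemma calQ_eq_primitive:
  fixes \<gamma> h :: real
  assumes "h > 0"
  shows "calQ \<gamma> h = (calQ_primitive \<gamma> h - calQ_primitive \<gamma> 1) / \<gamma>"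
proof -
  have "(LBINT s=ereal 1..ereal h. s powr (\<gamma> - 2) - s powr (-2))
      = calQ_primitive \<gamma> h - calQ_primitive \<gamma> 1"
  proof (rule interval_integral_FTC_finite)
    show "continuous_on {min 1 h..max 1 h} (\<lambda>s. s powr (\<gamma> - 2) - s powr (-2))"
      using assms by (intro continuous_intros) auto
    fix s assume "min 1 h \<le> s" "s \<le> max 1 h"
    then have "s > 0" using assms by simp
    then show "(calQ_primitive \<gamma> has_vector_derivative s powr (\<gamma> - 2) - s powr (-2))
        (at s within {min 1 h..max 1 h})"
      using calQ_primitive_has_real_derivative
      by (simp add: has_field_derivative_at_within flip: has_real_derivative_iff_has_vector_derivative)
  qed
  then show ?thesis unfolding calQ_def by (simp add: one_ereal_def)
qed

lemma calQ_has_real_derivative: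
  fixes \<gamma> h :: real
  assumes "h > 0"
  shows "(calQ \<gamma> has_real_derivative (h powr (\<gamma> - 2) - h powr (-2)) / \<gamma>) (at h)"
proof (rule has_field_derivative_transform_within_open[where S = "{0<..}"])
  show "((\<lambda>h. (calQ_primitive \<gamma> h - calQ_primitive \<gamma> 1) / \<gamma>) has_real_derivative
      (h powr (\<gamma> - 2) - h powr (-2)) / \<gamma>) (at h)"
    using DERIV_cdivide[OF DERIV_diff[OF calQ_primitive_has_real_derivative[OF assms] DERIV_const]]
    by simp
qed (use assms calQ_eq_primitive in auto)

lemma zeta_pos:
  fixes \<beta> \<gamma> :: real
  assumes "\<beta> > -1" and "\<gamma> \<noteq> 0"
  shows "zeta \<beta> \<gamma> > 0"
  using assms unfolding zeta_def by (intro mult_pos_pos add_pos_pos) auto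

lemma zeta_antimono:
  fixes \<alpha> \<beta> \<gamma> :: real
  assumes "\<gamma> > 0" and "-1 < \<alpha>" and "\<alpha> \<le> \<beta>"
  shows "zeta \<beta> \<gamma> \<le> zeta \<alpha> \<gamma>"
proof -
  have "(\<beta> + 1) powr (- 2 / \<gamma>) \<le> (\<alpha> + 1) powr (- 2 / \<gamma>)"
    and "(\<beta> + 1) powr (- 2 / \<gamma> - 1) \<le> (\<alpha> + 1) powr (- 2 / \<gamma> - 1)"
    using assms by (auto intro!: powr_mono2' simp: field_simps)
  then show ?thesis
    unfolding zeta_def by (intro mult_left_mono add_mono) auto
qed

lemma powr_eq_power_mult_powr:
  fixes t x c :: real
  assumes "t > 0" and "x = real n + c"
  shows "t powr x = t ^ n * t powr c"
  using assms by (simp add: powr_add powr_realpow)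

lemma calQ_minus_zeta_has_real_derivative:
  fixes \<gamma> t :: real
  assumes "\<gamma> > 0" and "t > 0"
  shows "((\<lambda>t. calQ \<gamma> (t powr (2 / \<gamma>)) - (t - 1)\<^sup>2 * zeta (t - 1) \<gamma>) has_real_derivative
    (t - 1)\<^sup>2 * t powr (- 2 / \<gamma> - 2) * (2 / \<gamma> * t + 2 / \<gamma> + 1) / \<gamma>\<^sup>2) (at t)"
proof -
  define p where "p = 2 / \<gamma>"
  have p: "p * \<gamma> = 2" "1 / \<gamma> * p = 2 / \<gamma>\<^sup>2"
    using assms(1) by (auto simp: p_def power2_eq_square)
  define u where "u = t powr (- p - 2)"
  \<comment> \<open>every power of \<open>t\<close> below is \<open>t\<^sup>n u\<close> with \<open>n \<le> 3\<close>, so the derivative becomes a polynomial in \<open>t\<close>\<close>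
  note shift = powr_eq_power_mult_powr[OF assms(2), where c = "- p - 2", folded u_def]
  have e1: "(t powr p) powr (\<gamma> - 2) * t powr (p - 1) = t ^ 3 * u"
    unfolding powr_powr powr_add[symmetric] by (rule shift) (use p(1) in \<open>simp add: algebra_simps\<close>)
  have e2: "(t powr p) powr (-2) * t powr (p - 1) = t * u"
    unfolding powr_powr powr_add[symmetric] by (simp add: shift[where n = 1])
  have e3: "t powr (- p) = t\<^sup>2 * u" "t powr (- p - 1) = t * u" "t powr (- p - 1 - 1) = u"
    by (simp_all add: shift[where n = 2] shift[where n = 1] shift[where n = 0])
  have outer: "((\<lambda>t. calQ \<gamma> (t powr p)) has_real_derivative
      ((t powr p) powr (\<gamma> - 2) - (t powr p) powr (-2)) / \<gamma> * (p * t powr (p - 1))) (at t)"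
    using assms(2) by (intro DERIV_chain2[OF calQ_has_real_derivative] has_real_derivative_powr) auto
  have inner: "((\<lambda>t. (t - 1)\<^sup>2 * (t powr (- p) + t powr (- p - 1))) has_real_derivative
      2 * (t - 1) * (t powr (- p) + t powr (- p - 1))
      + (- p * t powr (- p - 1) + (- p - 1) * t powr (- p - 1 - 1)) * (t - 1)\<^sup>2) (at t)"
    using assms(2) by (intro DERIV_mult DERIV_add has_real_derivative_powr) (auto intro!: derivative_eq_intros)
  have "((t powr p) powr (\<gamma> - 2) - (t powr p) powr (-2)) / \<gamma> * (p * t powr (p - 1))
      = 1 / \<gamma> * p * ((t powr p) powr (\<gamma> - 2) * t powr (p - 1) - (t powr p) powr (-2) * t powr (p - 1))"
    by (simp add: divide_inverse algebra_simps)
  also have "\<dots> = 2 * (t ^ 3 * u - t * u) / \<gamma>\<^sup>2"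
    unfolding e1 e2 p(2) by simp
  finally have derivative_eq: "((t powr p) powr (\<gamma> - 2) - (t powr p) powr (-2)) / \<gamma> * (p * t powr (p - 1))
      - (2 * (t - 1) * (t powr (- p) + t powr (- p - 1))
         + (- p * t powr (- p - 1) + (- p - 1) * t powr (- p - 1 - 1)) * (t - 1)\<^sup>2) / \<gamma>\<^sup>2
    = (t - 1)\<^sup>2 * u * (p * t + p + 1) / \<gamma>\<^sup>2"
    unfolding e3 by (simp add: diff_divide_distrib[symmetric] power2_eq_square power3_eq_cube algebra_simps)
  have "((\<lambda>t. calQ \<gamma> (t powr p) - (t - 1)\<^sup>2 * (t powr (- p) + t powr (- p - 1)) / \<gamma>\<^sup>2)
      has_real_derivative (t - 1)\<^sup>2 * u * (p * t + p + 1) / \<gamma>\<^sup>2) (at t)"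
    using DERIV_diff[OF outer DERIV_cdivide[OF inner, of "\<gamma>\<^sup>2"]] unfolding derivative_eq .
  moreover have "(\<lambda>t. calQ \<gamma> (t powr (2 / \<gamma>)) - (t - 1)\<^sup>2 * zeta (t - 1) \<gamma>)
      = (\<lambda>t. calQ \<gamma> (t powr p) - (t - 1)\<^sup>2 * (t powr (- p) + t powr (- p - 1)) / \<gamma>\<^sup>2)"
    by (simp add: zeta_def p_def)
  moreover have "t powr (- 2 / \<gamma> - 2) = u"
    by (simp add: u_def p_def)
  ultimately show ?thesis
    unfolding p_def by simp
qed

lemma sq_mult_zeta_le_calQ:
  fixes \<alpha> \<gamma> :: real
  assumes "\<gamma> > 0" and "\<alpha> \<ge> 0"
  shows "\<alpha>\<^sup>2 * zeta \<alpha> \<gamma> \<le> calQ \<gamma> ((\<alpha> + 1) powr (2 / \<gamma>))"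
proof -
  define H where "H = (\<lambda>t. calQ \<gamma> (t powr (2 / \<gamma>)) - (t - 1)\<^sup>2 * zeta (t - 1) \<gamma>)"
  have "H 1 \<le> H (\<alpha> + 1)"
  proof (rule DERIV_nonneg_imp_nondecreasing[where f = H])
    fix t :: real assume "1 \<le> t" "t \<le> \<alpha> + 1"
    then show "\<exists>y. (H has_real_derivative y) (at t) \<and> 0 \<le> y"
      using calQ_minus_zeta_has_real_derivative[OF assms(1), of t] assms(1)
      unfolding H_def by (intro exI conjI) auto
  qed (use assms(2) in simp)
  moreover have "H 1 = 0"
    by (simp add: H_def calQ_eq_primitive)
  ultimately show ?thesis
    by (simp add: H_def)
qed

theorem propositionB1:
  fixes \<alpha> \<beta> \<gamma> :: real
  assumes "\<gamma> \<ge> 1"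
    and "\<alpha> > 0" and "\<beta> > 0"
    and "-1 < \<alpha>" and "\<alpha> \<le> \<beta>"
  shows "\<alpha>\<^sup>2 \<le> calQ \<gamma> ((\<alpha> + 1) powr (2 / \<gamma>)) / zeta \<beta> \<gamma>"
proof -
  have \<gamma>: "\<gamma> > 0" using assms(1) by simp
  have "\<alpha>\<^sup>2 * zeta \<beta> \<gamma> \<le> \<alpha>\<^sup>2 * zeta \<alpha> \<gamma>"
    using zeta_antimono[OF \<gamma> assms(4,5)] by (simp add: mult_left_mono)
  also have "\<dots> \<le> calQ \<gamma> ((\<alpha> + 1) powr (2 / \<gamma>))"
    using sq_mult_zeta_le_calQ \<gamma> assms(2) by simp
  finally show ?thesis
    using zeta_pos[of \<beta> \<gamma>] \<gamma> assms(3) by (simp add: pos_le_divide_eq)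
qed

end
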